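(* Let $D$ be a finite directed graph that is essentially a tree, with at least two vertices, and let $v$ be a leaf of $D$, i.e. there is a unique vertex $x$ such that every edge of $D$ incident to $v$ is $\overrightarrow{vx}$ or $\overrightarrow{xv}$ (at least one of these is in $E(D)$). Let $D'=D\setminus\{v\}$ (delete $v$ and its incident edges), let $y_1,\ldots,y_k$ be the vertices $y$ of $D'$ with $\overrightarrow{yx}\in E(D')$, indexed so that $\overrightarrow{xy_i}\in E(D)$ exactly for $i=1,\ldots,s$ ($0\le s\le k$). Let $D_0=D'\setminus\{\overrightarrow{y_1x},\ldots,\overrightarrow{y_kx}\}$ and, for $p=1,\ldots,k$, let $D_p=D_0\setminus\{\overrightarrow{xy_p}\}$ (so $D_p=D_0$ for $p>s$). Let $F_1,\ldots,F_t$ be a shelling order of $\Delta(D')$, $H_1,\ldots,H_q$ a shelling order of $\Delta(D_0)$, and for each $p$ let $G^p_1,\ldots,G^p_{t_p}$ be a shelling order of $\Delta(D_p)$. Then: (a) If $\overrightarrow{xv}\in E(D)$ and $\overrightarrow{vx}\notin E(D)$, then $F_1\cup\{\overrightarrow{xv}\},\ldots,F_t\cup\{\overrightarrow{xv}\}$ is a shelling order of $\Delta(D)$, and $h_{i,j}(\Delta(D))=h_{i-1,j}(\Delta(D'))$ for all $i,j$. (b) If $\overrightarrow{xv}\notin E(D)$ and $\overrightarrow{vx}\in E(D)$, then $$H_1\cup\{\overrightarrow{vx}\},\ldots,H_q\cup\{\overrightarrow{vx}\},G^1_1\cup\{\overrightarrow{y_1x}\},\ldots,G^1_{t_1}\cup\{\overrightarrow{y_1x}\},\ldots,G^k_1\cup\{\overrightarrow{y_kx}\},\ldots,G^k_{t_k}\cup\{\overrightarrow{y_kx}\}$$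 is a shelling order of $\Delta(D)$, and $h_{i,j}(\Delta(D))=h_{i-1,j}(\Delta(D_0))+\sum_{p=1}^k h_{i-1,j-1}(\Delta(D_p))$. (c) If $\overrightarrow{xv},\overrightarrow{vx}\in E(D)$, then $$F_1\cup\{\overrightarrow{xv}\},\ldots,F_t\cup\{\overrightarrow{xv}\},H_1\cup\{\overrightarrow{vx}\},\ldots,H_q\cup\{\overrightarrow{vx}\}$$ is a shelling order of $\Delta(D)$, and $h_{i,j}(\Delta(D))=h_{i-1,j}(\Delta(D'))+h_{i-1,j-1}(\Delta(D_0))$.
   Context: For a finite directed graph $D$ (no loops, no multiple edges), $\Delta(D)$ has the directed edges of $D$ as vertices and the edge sets of directed forests in $D$ (vertex-disjoint unions of rooted directed trees; equivalently, edge sets in which every vertex has in-degree at most $1$ and there is no directed cycle) as faces. $D$ is essentially a tree if replacing every directed edge, or pair of opposite directed edges, by one undirected edge yields a tree. A (possibly nonpure) complex is shellable with shelling order $F_1,\ldots,F_k$ of its facets if for all $i<j$ there exist $l<j$ and $v\in F_j$ with $F_i\cap F_j\subseteq F_l\cap F_j=F_j\setminus\{v\}$. For a complex $\Delta$, $f_{i,j}(\Delta)$ is the number of faces $A$ with $|A|=j$ such that the largest face containing $A$ has $i$ vertices, and the $h$-triangle is $h_{i,j}(\Delta)=\sum_{k=0}^{j}(-1)^{j-k}{i-k\choose j-k}f_{i,k}(\Delta)$. *)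

theory Defs
  imports Main
begin

definition digraph :: "'a set \<Rightarrow> ('a \<times> 'a) set \<Rightarrow> bool" where
  "digraph V E \<longleftrightarrow> finite V \<and> E \<subseteq> V \<times> V \<and> (\<forall>u. (u, u) \<notin> E)"

definition uadj :: "('a \<times> 'a) set \<Rightarrow> 'a \<Rightarrow> 'a \<Rightarrow> bool" where
  "uadj E u w \<longleftrightarrow> (u, w) \<in> E \<or> (w, u) \<in> E"

definition uconnected :: "'a set \<Rightarrow> ('a \<times> 'a) set \<Rightarrow> bool" where
  "uconnected V E \<longleftrightarrow> (\<forall>u\<in>V. \<forall>w\<in>V. (u, w) \<in> {(a, b). uadj E a b}\<^sup>*)"

definition has_ucycle :: "('a \<times> 'a) set \<Rightarrow> bool" where
  "has_ucycle E \<longleftrightarrow> (\<exists>cs. length cs \<ge> 3 \<and> distinct cs \<and>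
     (\<forall>i < length cs. uadj E (cs ! i) (cs ! (Suc i mod length cs))))"

definition essentially_tree :: "'a set \<Rightarrow> ('a \<times> 'a) set \<Rightarrow> bool" where
  "essentially_tree V E \<longleftrightarrow> V \<noteq> {} \<and> uconnected V E \<and> \<not> has_ucycle E"

definition directed_forest :: "('a \<times> 'a) set \<Rightarrow> ('a \<times> 'a) set \<Rightarrow> bool" where
  "directed_forest E A \<longleftrightarrow> A \<subseteq> E \<and> (\<forall>u u' w. (u, w) \<in> A \<and> (u', w) \<in> A \<longrightarrow> u = u')
     \<and> acyclic A"

text \<open>The complex \<Delta>(D), given as its set of faces (vertices = edges of D).\<close>
definition Delta :: "('a \<times> 'a) set \<Rightarrow> ('a \<times> 'a) set set" where
  "Delta E = {A. directed_forest E A}"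

definition facets :: "'v set set \<Rightarrow> 'v set set" where
  "facets \<Delta> = {F \<in> \<Delta>. \<forall>G \<in> \<Delta>. F \<subseteq> G \<longrightarrow> G = F}"

definition shelling_order :: "'v set set \<Rightarrow> 'v set list \<Rightarrow> bool" where
  "shelling_order \<Delta> Fs \<longleftrightarrow> distinct Fs \<and> set Fs = facets \<Delta> \<and>
     (\<forall>j < length Fs. \<forall>i < j. \<exists>l < j. \<exists>v \<in> Fs ! j.
        Fs ! i \<inter> Fs ! j \<subseteq> Fs ! l \<inter> Fs ! j \<and> Fs ! l \<inter> Fs ! j = Fs ! j - {v})"

definition maxface_size :: "'v set set \<Rightarrow> 'v set \<Rightarrow> nat" where
  "maxface_size \<Delta> A = Max (card ` {B \<in> \<Delta>. A \<subseteq> B})"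

text \<open>f_{i,j}, with integer indices (zero for negative indices).\<close>
definition ftri :: "'v set set \<Rightarrow> int \<Rightarrow> int \<Rightarrow> nat" where
  "ftri \<Delta> i j = card {A \<in> \<Delta>. int (card A) = j \<and> int (maxface_size \<Delta> A) = i}"

text \<open>h_{i,j} = sum_{k=0}^{j} (-1)^{j-k} binom(i-k, j-k) f_{i,k}; integer indices,
  so that h_{i-1,j} and h_{i-1,j-1} make sense for all i, j (empty sum if j < 0).
  When k > i the term vanishes since f_{i,k} = 0.\<close>
definition htri :: "'v set set \<Rightarrow> int \<Rightarrow> int \<Rightarrow> int" where
  "htri \<Delta> i j = (\<Sum>k\<in>{0..j}. (-1) ^ nat (j - k) * int (nat (i - k) choose nat (j - k))
                      * int (ftri \<Delta> i k))"

definition del_vertex_edges :: "('a \<times> 'a) set \<Rightarrow> 'a \<Rightarrow> ('a \<times> 'a) set" where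
  "del_vertex_edges E v = {e \<in> E. fst e \<noteq> v \<and> snd e \<noteq> v}"

end

theory Submission
  imports Defs "HOL-Library.Transitive_Closure_Table"
begin

text \<open>
  Write \<open>e * \<Gamma>\<close> for the cone over a complex \<open>\<Gamma>\<close> with a new apex \<open>e\<close>. A directed forest of
  \<open>D\<close> contains at most one of the leaf edges \<open>xv\<close>, \<open>vx\<close>; removing it leaves a forest of \<open>D'\<close>,
  resp. of \<open>D\<^sub>0\<close> (the in-degree of \<open>x\<close> is at most one), and conversely these edges can always
  be added back. Likewise a forest of \<open>D'\<close> either has no in-edge at \<open>x\<close> and is a forest of
  \<open>D\<^sub>0\<close>, or its unique in-edge at \<open>x\<close> is some \<open>y\<^sub>px\<close> and the rest is a forest of \<open>D\<^sub>p\<close>;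
  adding \<open>y\<^sub>px\<close> to a forest of \<open>D\<^sub>p\<close> creates no directed cycle, since a path from \<open>x\<close> to
  \<open>y\<^sub>p\<close> avoiding the edge \<open>xy\<^sub>p\<close> would close a cycle in the tree underlying \<open>D\<close>. So in
  all three cases \<open>\<Delta>(D) = \<Gamma> \<union> e\<^sub>0 * \<Gamma> \<union> \<Union>\<^sub>r e\<^sub>r * \<Gamma>\<^sub>r\<close> with subcomplexes
  \<open>\<Gamma>\<^sub>r \<subseteq> \<Gamma>\<close> and distinct new vertices: \<open>\<Gamma> = \<Delta>(D')\<close>, \<open>e\<^sub>0 = xv\<close> and no \<open>r\<close> in
  case (a); \<open>\<Gamma> = \<Delta>(D\<^sub>0)\<close>, \<open>e\<^sub>0 = vx\<close>, \<open>e\<^sub>p = y\<^sub>px\<close>, \<open>\<Gamma>\<^sub>p = \<Delta>(D\<^sub>p)\<close> in case (b);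
  \<open>\<Gamma> = \<Delta>(D')\<close>, \<open>e\<^sub>0 = xv\<close> and a single \<open>e\<^sub>1 = vx\<close>, \<open>\<Gamma>\<^sub>1 = \<Delta>(D\<^sub>0)\<close> in case (c).

  For such a decomposition the facets of \<open>\<Delta>\<close> are the cones over the facets of \<open>\<Gamma>\<close> and of the
  \<open>\<Gamma>\<^sub>r\<close>, and the largest face containing a given face gains exactly one vertex. Hence
  \<open>f(i, j, \<Delta>) = f(i - 1, j, \<Gamma>) + f(i - 1, j - 1, \<Gamma>) + (\<Sum>\<^sub>r f(i - 1, j - 1, \<Gamma>\<^sub>r))\<close>, and Pascal's rule
  turns this into the stated recursion for the \<open>h\<close>-triangle. Finally the coned shelling of \<open>\<Gamma>\<close>
  followed by the coned shellings of the \<open>\<Gamma>\<^sub>r\<close> is a shelling: a facet \<open>F\<close> of \<open>\<Gamma>\<^sub>r\<close> lies in a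
  facet \<open>H\<close> of \<open>\<Gamma>\<close>, and \<open>e\<^sub>0 + H\<close> meets \<open>e\<^sub>r + F\<close> in its codimension-one face \<open>F\<close>.
\<close>

section \<open>Shellings\<close>

definition shelling_step :: "'v set set \<Rightarrow> 'v set \<Rightarrow> 'v set \<Rightarrow> bool" where
  "shelling_step P X F \<longleftrightarrow> (\<exists>Y\<in>P. \<exists>w\<in>F. X \<inter> F \<subseteq> Y \<inter> F \<and> Y \<inter> F = F - {w})"

fun shelling_continues :: "'v set set \<Rightarrow> 'v set list \<Rightarrow> bool" where
  "shelling_continues P [] \<longleftrightarrow> True"
| "shelling_continues P (F # Fs) \<longleftrightarrow>
     (\<forall>X\<in>P. shelling_step P X F) \<and> shelling_continues (insert F P) Fs"

lemma shelling_continues_iff_nth: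
  "shelling_continues P Fs \<longleftrightarrow>
     (\<forall>j<length Fs. \<forall>X \<in> P \<union> set (take j Fs). shelling_step (P \<union> set (take j Fs)) X (Fs ! j))"
proof (induction Fs arbitrary: P)
  case (Cons F Fs)
  have "insert F P \<union> set (take j Fs) = P \<union> set (take (Suc j) (F # Fs))" for j
    by auto
  then show ?case
    using Cons.IH by (simp add: All_less_Suc2)
qed simp

lemma shelling_order_iff:
  "shelling_order \<Delta> Fs \<longleftrightarrow> distinct Fs \<and> set Fs = facets \<Delta> \<and> shelling_continues {} Fs"
proof -
  have "(\<forall>i<j. \<exists>l<j. \<exists>v\<in>Fs ! j. Fs ! i \<inter> Fs ! j \<subseteq> Fs ! l \<inter> Fs ! j \<and> Fs ! l \<inter> Fs ! j = Fs ! j - {v})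
      \<longleftrightarrow> (\<forall>X \<in> set (take j Fs). shelling_step (set (take j Fs)) X (Fs ! j))"
    if "j < length Fs" for j
    using that by (simp add: nth_image [symmetric] shelling_step_def atLeast0LessThan) blast
  then show ?thesis
    unfolding shelling_order_def shelling_continues_iff_nth by auto
qed

lemma shelling_continues_append:
  "shelling_continues P (Fs @ Gs) \<longleftrightarrow> shelling_continues P Fs \<and> shelling_continues (P \<union> set Fs) Gs"
  by (induction Fs arbitrary: P) auto

lemma shelling_step_mono: "shelling_step P X F \<Longrightarrow> P \<subseteq> Q \<Longrightarrow> shelling_step Q X F"
  unfolding shelling_step_def by blast

lemma shelling_step_cone:
  assumes "shelling_step P X F" and "e \<notin> F"
  shows "shelling_step (insert e ` P) (insert e X) (insert e F)"
proof -
  obtain Y w where "Y \<in> P" "w \<in> F" "X \<inter> F \<subseteq> Y \<inter> F" "Y \<inter> F = F - {w}"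
    using assms(1) unfolding shelling_step_def by blast
  moreover have "w \<noteq> e"
    using \<open>w \<in> F\<close> assms(2) by blast
  ultimately show ?thesis
    unfolding shelling_step_def by (intro bexI[of _ "insert e Y"] bexI[of _ w]) auto
qed

lemma shelling_step_new_vertex:
  assumes "Y \<in> P" and "Y \<inter> insert e F = F" and "e \<notin> X" and "e \<notin> F"
  shows "shelling_step P X (insert e F)"
  unfolding shelling_step_def
  using assms by (intro bexI[of _ Y] bexI[of _ e]) auto

lemma shelling_continues_cone:
  assumes "shelling_continues P Fs" and "\<forall>F\<in>set Fs. e \<notin> F" and "insert e ` P \<subseteq> S"
    and "\<forall>F\<in>set Fs. \<forall>X \<in> S - insert e ` P. shelling_step S X (insert e F)"
  shows "shelling_continues S (map (insert e) Fs)"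
  using assms
proof (induction Fs arbitrary: P S)
  case (Cons F Fs)
  have "shelling_step S X (insert e F)" if "X \<in> S" for X
  proof (cases "X \<in> insert e ` P")
    case True
    then obtain X0 where "X0 \<in> P" and X: "X = insert e X0"
      by blast
    then have "shelling_step (insert e ` P) X (insert e F)"
      using Cons.prems(1,2) shelling_step_cone by fastforce
    then show ?thesis
      using Cons.prems(3) by (rule shelling_step_mono)
  next
    case False
    then show ?thesis
      using Cons.prems(4) that by simp
  qed
  moreover have "shelling_continues (insert (insert e F) S) (map (insert e) Fs)"
  proof (rule Cons.IH)
    show "\<forall>F'\<in>set Fs. \<forall>X \<in> insert (insert e F) S - insert e ` insert F P.
        shelling_step (insert (insert e F) S) X (insert e F')"
    proof (intro ballI)
      fix F' X
      assume "F' \<in> set Fs" and "X \<in> insert (insert e F) S - insert e ` insert F P"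
      then have "shelling_step S X (insert e F')"
        using Cons.prems(4) by auto
      then show "shelling_step (insert (insert e F) S) X (insert e F')"
        by (rule shelling_step_mono) blast
    qed
  qed (use Cons.prems in auto)
  ultimately show ?case
    by simp
qed simp

section \<open>Cones\<close>

lemma facets_subset: "facets \<Delta> \<subseteq> \<Delta>"
  unfolding facets_def by blast

lemma facet_above:
  assumes "finite \<Delta>" and "A \<in> \<Delta>"
  obtains F where "F \<in> facets \<Delta>" and "A \<subseteq> F"
proof -
  have "\<exists>F \<in> {B \<in> \<Delta>. A \<subseteq> B}. \<forall>B \<in> {B \<in> \<Delta>. A \<subseteq> B}. F \<subseteq> B \<longrightarrow> F = B"
    using assms by (intro finite_has_maximal) auto
  then obtain F where F: "F \<in> {B \<in> \<Delta>. A \<subseteq> B}" "\<forall>B \<in> {B \<in> \<Delta>. A \<subseteq> B}. F \<subseteq> B \<longrightarrow> F = B"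
    by blast
  then have "F \<in> facets \<Delta>"
    unfolding facets_def by fastforce
  with F that show ?thesis
    by blast
qed

lemma inj_on_insert_fresh: "\<forall>B\<in>S. a \<notin> B \<Longrightarrow> inj_on (insert a) S"
  unfolding inj_on_def by (metis Diff_insert_absorb)

lemma distinct_map_insert_fresh: "distinct Fs \<Longrightarrow> \<forall>F\<in>set Fs. a \<notin> F \<Longrightarrow> distinct (map (insert a) Fs)"
  by (simp add: distinct_map inj_on_insert_fresh)

lemma card_le_maxface_size: "finite \<Delta> \<Longrightarrow> A \<in> \<Delta> \<Longrightarrow> A \<subseteq> C \<Longrightarrow> C \<in> \<Delta> \<Longrightarrow> card C \<le> maxface_size \<Delta> A"
  unfolding maxface_size_def by (rule Max_ge) auto

lemma maxface_size_attained:
  assumes "finite \<Delta>" and "A \<in> \<Delta>"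
  obtains B where "B \<in> \<Delta>" and "A \<subseteq> B" and "card B = maxface_size \<Delta> A"
proof -
  have "maxface_size \<Delta> A \<in> card ` {B \<in> \<Delta>. A \<subseteq> B}"
    unfolding maxface_size_def using assms by (intro Max_in) auto
  with that show ?thesis
    by force
qed

lemma faces_above_cone:
  assumes star: "{C \<in> \<Delta>. a \<in> C} = insert a ` \<Gamma>" and fresh: "\<forall>B\<in>\<Gamma>. a \<notin> B" and "a \<notin> B"
  shows "{C \<in> \<Delta>. insert a B \<subseteq> C} = insert a ` {C \<in> \<Gamma>. B \<subseteq> C}"
proof -
  have "{C \<in> \<Delta>. insert a B \<subseteq> C} = {C \<in> insert a ` \<Gamma>. B \<subseteq> C}"
    using star by blast
  also have "\<dots> = insert a ` {C \<in> \<Gamma>. B \<subseteq> C}"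
    using fresh \<open>a \<notin> B\<close> by blast
  finally show ?thesis .
qed

lemma maxface_size_cone:
  assumes star: "{C \<in> \<Delta>. a \<in> C} = insert a ` \<Gamma>" and fresh: "\<forall>B\<in>\<Gamma>. a \<notin> B"
    and "finite \<Gamma>" and "\<forall>B\<in>\<Gamma>. finite B" and "B \<in> \<Gamma>"
  shows "maxface_size \<Delta> (insert a B) = maxface_size \<Gamma> B + 1"
proof -
  let ?U = "{C \<in> \<Gamma>. B \<subseteq> C}"
  have "a \<notin> B"
    using fresh \<open>B \<in> \<Gamma>\<close> by blast
  have "card ` insert a ` ?U = Suc ` card ` ?U"
    using assms(2,4) by (force simp: image_image)
  moreover have "Max (Suc ` card ` ?U) = Suc (Max (card ` ?U))"
    using assms(3,5) by (intro mono_Max_commute [symmetric]) (auto simp: mono_def)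
  ultimately show ?thesis
    unfolding maxface_size_def faces_above_cone[OF star fresh \<open>a \<notin> B\<close>] by simp
qed

lemma facets_cone:
  assumes star: "{C \<in> \<Delta>. a \<in> C} = insert a ` \<Gamma>" and fresh: "\<forall>B\<in>\<Gamma>. a \<notin> B" and "a \<notin> B"
  shows "insert a B \<in> facets \<Delta> \<longleftrightarrow> B \<in> facets \<Gamma>"
proof -
  have "insert a B \<in> \<Delta> \<longleftrightarrow> insert a B \<in> insert a ` \<Gamma>"
    using star by blast
  also have "\<dots> \<longleftrightarrow> B \<in> \<Gamma>"
    using fresh \<open>a \<notin> B\<close> by (auto simp: insert_ident)
  finally have "insert a B \<in> \<Delta> \<longleftrightarrow> B \<in> \<Gamma>" .
  moreover have "(\<forall>G \<in> {C \<in> \<Delta>. insert a B \<subseteq> C}. G = insert a B) \<longleftrightarrow> (\<forall>C \<in> {C \<in> \<Gamma>. B \<subseteq> C}. C = B)"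
    unfolding faces_above_cone[OF assms] using fresh \<open>a \<notin> B\<close> by (auto simp: insert_ident)
  ultimately show ?thesis
    unfolding facets_def by blast
qed

section \<open>The \<open>f\<close>- and \<open>h\<close>-triangles\<close>

definition h_weight :: "int \<Rightarrow> int \<Rightarrow> int \<Rightarrow> int" where
  "h_weight i j k = (-1) ^ nat (j - k) * int (nat (i - k) choose nat (j - k))"

definition h_transform :: "(int \<Rightarrow> int) \<Rightarrow> int \<Rightarrow> int \<Rightarrow> int" where
  "h_transform g i j = (\<Sum>k\<in>{0..j}. h_weight i j k * g k)"

lemma htri_eq_h_transform: "htri \<Delta> i j = h_transform (\<lambda>k. int (ftri \<Delta> i k)) i j"
  unfolding htri_def h_transform_def h_weight_def by simp

lemma h_transform_add: "h_transform (\<lambda>k. f k + g k) i j = h_transform f i j + h_transform g i j"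
  unfolding h_transform_def by (simp add: distrib_left sum.distrib)

lemma h_transform_sum:
  "h_transform (\<lambda>k. \<Sum>r\<in>R. g r k) i j = (\<Sum>r\<in>R. h_transform (g r) i j)"
  unfolding h_transform_def by (simp add: sum_distrib_left sum.swap [of _ R])

lemma h_transform_shift:
  assumes "g (-1) = 0"
  shows "h_transform (\<lambda>k. g (k - 1)) i j = h_transform g (i - 1) (j - 1)"
proof -
  have "h_transform (\<lambda>k. g (k - 1)) i j = (\<Sum>k\<in>{-1..j - 1}. h_weight i j (k + 1) * g k)"
    unfolding h_transform_def
    by (rule sum.reindex_bij_witness[of _ "\<lambda>k. k + 1" "\<lambda>k. k - 1"]) auto
  also have "\<dots> = (\<Sum>k\<in>{0..j - 1}. h_weight i j (k + 1) * g k)"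
  proof (cases "j \<ge> 0")
    case True
    then have "{-1..j - 1} = insert (-1) {0..j - 1}"
      by auto
    then show ?thesis
      using assms by simp
  qed simp
  also have "\<dots> = h_transform g (i - 1) (j - 1)"
    unfolding h_transform_def h_weight_def by (simp add: algebra_simps)
  finally show ?thesis .
qed

lemma h_weight_pascal:
  assumes "0 \<le> k" and "k < j" and "k < i"
  shows "h_weight i j k + h_weight (i - 1) (j - 1) k = h_weight (i - 1) j k"
proof -
  define a m where "a = nat (i - 1 - k)" and "m = nat (j - 1 - k)"
  have "nat (i - k) = Suc a" "nat (j - k) = Suc m" "nat (i - 1 - k) = a" "nat (j - 1 - k) = m"
    using assms unfolding a_def m_def by auto
  then show ?thesis
    unfolding h_weight_def by (simp add: algebra_simps)
qed

lemma h_transform_pascal: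
  assumes "\<forall>k\<ge>i. g k = 0"
  shows "h_transform g i j + h_transform g (i - 1) (j - 1) = h_transform g (i - 1) j"
proof (cases "j \<ge> 0")
  case True
  have split: "{0..j} = insert j {0..j - 1}"
    using True by auto
  have "h_weight i j k * g k + h_weight (i - 1) (j - 1) k * g k = h_weight (i - 1) j k * g k"
    if "k \<in> {0..j - 1}" for k
    using that assms h_weight_pascal[of k j i] by (cases "k < i") (auto simp flip: distrib_right)
  moreover have "h_weight i j j = h_weight (i - 1) j j"
    unfolding h_weight_def by simp
  ultimately show ?thesis
    unfolding h_transform_def split by (simp add: sum.distrib [symmetric])
qed (simp add: h_transform_def)

definition faces_with :: "'v set set \<Rightarrow> int \<Rightarrow> int \<Rightarrow> 'v set set" where
  "faces_with \<Delta> i j = {A \<in> \<Delta>. int (card A) = j \<and> int (maxface_size \<Delta> A) = i}"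

lemma ftri_eq_card_faces_with: "ftri \<Delta> i j = card (faces_with \<Delta> i j)"
  unfolding ftri_def faces_with_def ..

lemma faces_with_subset: "faces_with \<Delta> i j \<subseteq> \<Delta>"
  unfolding faces_with_def by blast

lemma ftri_negative: "k < 0 \<Longrightarrow> ftri \<Delta> i k = 0"
  unfolding ftri_def by auto

lemma ftri_above_diagonal: "finite \<Delta> \<Longrightarrow> i < k \<Longrightarrow> ftri \<Delta> i k = 0"
  unfolding ftri_def using card_le_maxface_size[of \<Delta>] by fastforce

section \<open>Cone decompositions\<close>

locale cone_decomposition =
  fixes \<Delta> \<Gamma> :: "'v set set" and e0 :: 'v and R :: "'r set" and e :: "'r \<Rightarrow> 'v"
    and \<Gamma>s :: "'r \<Rightarrow> 'v set set"
  assumes finite_\<Gamma>: "finite \<Gamma>" and finite_faces: "\<forall>A\<in>\<Gamma>. finite A"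
    and \<Gamma>s_subset: "\<forall>r\<in>R. \<Gamma>s r \<subseteq> \<Gamma>" and finite_R: "finite R"
    and e0_fresh: "\<forall>A\<in>\<Gamma>. e0 \<notin> A" and e_fresh: "\<forall>r\<in>R. \<forall>A\<in>\<Gamma>. e r \<notin> A"
    and e0_not_e: "e0 \<notin> e ` R" and inj_e: "inj_on e R"
    and decomp: "\<Delta> = \<Gamma> \<union> insert e0 ` \<Gamma> \<union> (\<Union>r\<in>R. insert (e r) ` \<Gamma>s r)"
begin

lemma finite_\<Gamma>s: "r \<in> R \<Longrightarrow> finite (\<Gamma>s r)"
  using \<Gamma>s_subset finite_\<Gamma> finite_subset by blast

lemma finite_\<Delta>: "finite \<Delta>"
  unfolding decomp using finite_\<Gamma> finite_R finite_\<Gamma>s by auto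

lemma face_cases:
  assumes "C \<in> \<Delta>"
  obtains "C \<in> \<Gamma>"
  | B where "B \<in> \<Gamma>" "C = insert e0 B"
  | r B where "r \<in> R" "B \<in> \<Gamma>s r" "C = insert (e r) B"
  using assms unfolding decomp by blast

lemma star_e0: "{C \<in> \<Delta>. e0 \<in> C} = insert e0 ` \<Gamma>"
proof (intro equalityI subsetI)
  fix C
  assume "C \<in> {C \<in> \<Delta>. e0 \<in> C}"
  then have "C \<in> \<Delta>" "e0 \<in> C"
    by auto
  then show "C \<in> insert e0 ` \<Gamma>"
  proof (cases rule: face_cases)
    case (3 r B)
    then have "B \<in> \<Gamma>" "e r \<noteq> e0"
      using \<Gamma>s_subset e0_not_e by auto
    then show ?thesis
      using 3 \<open>e0 \<in> C\<close> e0_fresh by blast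
  qed (use e0_fresh in auto)
qed (auto simp: decomp)

lemma star_e:
  assumes "r \<in> R"
  shows "{C \<in> \<Delta>. e r \<in> C} = insert (e r) ` \<Gamma>s r"
proof (intro equalityI subsetI)
  fix C
  assume "C \<in> {C \<in> \<Delta>. e r \<in> C}"
  then have "C \<in> \<Delta>" "e r \<in> C"
    by auto
  then show "C \<in> insert (e r) ` \<Gamma>s r"
  proof (cases rule: face_cases)
    case 2
    then show ?thesis
      using \<open>e r \<in> C\<close> e_fresh e0_not_e assms by auto
  next
    case (3 r' B)
    then have "B \<in> \<Gamma>"
      using \<Gamma>s_subset by auto
    then have "e r = e r'"
      using 3 \<open>e r \<in> C\<close> e_fresh assms by auto
    then show ?thesis
      using 3 inj_on_eq_iff[OF inj_e assms] by auto
  qed (use e_fresh assms in auto)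
qed (use assms in \<open>auto simp: decomp\<close>)

lemma e_fresh_\<Gamma>s: "r \<in> R \<Longrightarrow> \<forall>A\<in>\<Gamma>s r. e r \<notin> A"
  using e_fresh \<Gamma>s_subset by blast

lemma maxface_size_e0: "B \<in> \<Gamma> \<Longrightarrow> maxface_size \<Delta> (insert e0 B) = maxface_size \<Gamma> B + 1"
  using star_e0 e0_fresh finite_\<Gamma> finite_faces by (rule maxface_size_cone)

lemma maxface_size_e:
  "r \<in> R \<Longrightarrow> B \<in> \<Gamma>s r \<Longrightarrow> maxface_size \<Delta> (insert (e r) B) = maxface_size (\<Gamma>s r) B + 1"
  by (rule maxface_size_cone[OF star_e e_fresh_\<Gamma>s finite_\<Gamma>s]) (use finite_faces \<Gamma>s_subset in auto)

lemma maxface_size_base: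
  assumes "A \<in> \<Gamma>"
  shows "maxface_size \<Delta> A = maxface_size \<Gamma> A + 1"
proof -
  let ?M = "maxface_size \<Gamma> A"
  have cone_bound: "card (insert a B) \<le> ?M + 1" if "B \<in> \<Gamma>" "A \<subseteq> insert a B" "a \<notin> A" for a B
  proof -
    have "card B \<le> ?M"
      using that card_le_maxface_size[OF finite_\<Gamma> assms] by blast
    then show ?thesis
      using finite_faces that(1) by (simp add: card_insert_if)
  qed
  have "card C \<le> ?M + 1" if "C \<in> \<Delta>" and "A \<subseteq> C" for C
    using that(1)
  proof (cases rule: face_cases)
    case 1
    then show ?thesis
      using card_le_maxface_size[OF finite_\<Gamma> assms that(2)] by simp
  next
    case (2 B')
    moreover have "e0 \<notin> A"
      using assms e0_fresh by blast
    ultimately show ?thesis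
      using that(2) cone_bound by simp
  next
    case (3 r B')
    moreover have "B' \<in> \<Gamma>" and "e r \<notin> A"
      using 3 assms \<Gamma>s_subset e_fresh by blast+
    ultimately show ?thesis
      using that(2) cone_bound by simp
  qed
  moreover obtain B where B: "B \<in> \<Gamma>" "A \<subseteq> B" "card B = ?M"
    using maxface_size_attained finite_\<Gamma> assms by blast
  then have "insert e0 B \<in> \<Delta>" and "card (insert e0 B) = ?M + 1"
    using e0_fresh finite_faces unfolding decomp by auto
  ultimately show ?thesis
    unfolding maxface_size_def using finite_\<Delta> B(2)
    by (intro Max_eqI) (auto intro!: image_eqI [of _ card "insert e0 B"])
qed

lemma facets_decomp:
  "facets \<Delta> = insert e0 ` facets \<Gamma> \<union> (\<Union>r\<in>R. insert (e r) ` facets (\<Gamma>s r))"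
proof (intro equalityI subsetI)
  fix F
  assume F: "F \<in> facets \<Delta>"
  then have "F \<in> \<Delta>"
    using facets_subset by blast
  then show "F \<in> insert e0 ` facets \<Gamma> \<union> (\<Union>r\<in>R. insert (e r) ` facets (\<Gamma>s r))"
  proof (cases rule: face_cases)
    case 1
    then have "insert e0 F \<in> \<Delta>" and "e0 \<notin> F"
      using e0_fresh unfolding decomp by auto
    then show ?thesis
      using F unfolding facets_def by blast
  next
    case (2 B)
    then have "B \<in> facets \<Gamma>"
      using F facets_cone[OF star_e0 e0_fresh, of B] e0_fresh by simp
    then show ?thesis
      using 2 by blast
  next
    case (3 r B)
    then have "B \<in> facets (\<Gamma>s r)"
      using F facets_cone[OF star_e e_fresh_\<Gamma>s, of r B] e_fresh_\<Gamma>s by simp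
    then show ?thesis
      using 3 by blast
  qed
next
  fix F
  assume "F \<in> insert e0 ` facets \<Gamma> \<union> (\<Union>r\<in>R. insert (e r) ` facets (\<Gamma>s r))"
  then consider B where "B \<in> facets \<Gamma>" "F = insert e0 B"
    | r B where "r \<in> R" "B \<in> facets (\<Gamma>s r)" "F = insert (e r) B"
    by blast
  then show "F \<in> facets \<Delta>"
  proof cases
    case (1 B)
    then have "e0 \<notin> B"
      using e0_fresh facets_subset by blast
    with 1 show ?thesis
      using facets_cone[OF star_e0 e0_fresh, of B] by simp
  next
    case (2 r B)
    then have "e r \<notin> B"
      using e_fresh_\<Gamma>s facets_subset by blast
    with 2 show ?thesis
      using facets_cone[OF star_e e_fresh_\<Gamma>s, of r B] by simp
  qed
qed

lemma faces_with_decomp: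
  "faces_with \<Delta> i j = faces_with \<Gamma> (i - 1) j \<union> insert e0 ` faces_with \<Gamma> (i - 1) (j - 1)
     \<union> (\<Union>r\<in>R. insert (e r) ` faces_with (\<Gamma>s r) (i - 1) (j - 1))"
proof -
  let ?P = "\<lambda>A. int (card A) = j \<and> int (maxface_size \<Delta> A) = i"
  have base: "{A \<in> \<Gamma>. ?P A} = faces_with \<Gamma> (i - 1) j"
    unfolding faces_with_def using maxface_size_base by force
  have cone0: "{A \<in> insert e0 ` \<Gamma>. ?P A} = insert e0 ` faces_with \<Gamma> (i - 1) (j - 1)"
  proof -
    have "?P (insert e0 B) \<longleftrightarrow> int (card B) = j - 1 \<and> int (maxface_size \<Gamma> B) = i - 1"
      if "B \<in> \<Gamma>" for B
      using that maxface_size_e0 e0_fresh finite_faces by auto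
    then show ?thesis
      unfolding faces_with_def by blast
  qed
  have cone: "{A \<in> insert (e r) ` \<Gamma>s r. ?P A} = insert (e r) ` faces_with (\<Gamma>s r) (i - 1) (j - 1)"
    if r: "r \<in> R" for r
  proof -
    have "?P (insert (e r) B) \<longleftrightarrow> int (card B) = j - 1 \<and> int (maxface_size (\<Gamma>s r) B) = i - 1"
      if "B \<in> \<Gamma>s r" for B
    proof -
      have "finite B" and "e r \<notin> B"
        using that r e_fresh_\<Gamma>s finite_faces \<Gamma>s_subset by blast+
      then have "card (insert (e r) B) = card B + 1"
        by simp
      then show ?thesis
        using that r maxface_size_e by auto
    qed
    then show ?thesis
      unfolding faces_with_def by blast
  qed
  have "faces_with \<Delta> i j
      = {A \<in> \<Gamma>. ?P A} \<union> {A \<in> insert e0 ` \<Gamma>. ?P A} \<union> (\<Union>r\<in>R. {A \<in> insert (e r) ` \<Gamma>s r. ?P A})"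
    unfolding faces_with_def decomp by blast
  then show ?thesis
    using base cone0 cone by simp
qed

lemma ftri_decomp:
  "ftri \<Delta> i j = ftri \<Gamma> (i - 1) j + ftri \<Gamma> (i - 1) (j - 1) + (\<Sum>r\<in>R. ftri (\<Gamma>s r) (i - 1) (j - 1))"
proof -
  let ?S = "\<lambda>\<Gamma>'. faces_with \<Gamma>' (i - 1) (j - 1)"
  let ?B = "faces_with \<Gamma> (i - 1) j \<union> insert e0 ` ?S \<Gamma>"
  let ?C = "\<lambda>r. insert (e r) ` ?S (\<Gamma>s r)"
  have S_\<Gamma>: "?S \<Gamma> \<subseteq> \<Gamma>" and S_\<Gamma>s: "r \<in> R \<Longrightarrow> ?S (\<Gamma>s r) \<subseteq> \<Gamma>" for r
    using faces_with_subset \<Gamma>s_subset by blast+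
  have fin: "finite (faces_with \<Gamma> a b)" "r \<in> R \<Longrightarrow> finite (faces_with (\<Gamma>s r) a b)" for r a b
    using finite_subset[OF faces_with_subset] finite_\<Gamma> finite_\<Gamma>s by blast+
  have card0: "card (insert e0 ` ?S \<Gamma>) = card (?S \<Gamma>)"
    using S_\<Gamma> e0_fresh by (intro card_image inj_on_insert_fresh) blast
  have card_r: "card (?C r) = card (?S (\<Gamma>s r))" if "r \<in> R" for r
    using that faces_with_subset e_fresh_\<Gamma>s by (intro card_image inj_on_insert_fresh) blast
  have disjoint0: "faces_with \<Gamma> (i - 1) j \<inter> insert e0 ` ?S \<Gamma> = {}"
    using faces_with_subset e0_fresh by blast
  have disjoint_r: "?C r \<inter> ?C r' = {}" if "r \<in> R" "r' \<in> R" "r \<noteq> r'" for r r'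
  proof -
    have "e r \<noteq> e r'"
      using that inj_on_eq_iff[OF inj_e] by blast
    moreover have "e r \<notin> X" if "X \<in> ?S (\<Gamma>s r')" for X
      using that S_\<Gamma>s[OF \<open>r' \<in> R\<close>] e_fresh \<open>r \<in> R\<close> by blast
    ultimately show ?thesis
      by blast
  qed
  have "e r \<notin> X" if "X \<in> ?B" "r \<in> R" for X r
  proof -
    from that(1) consider "X \<in> \<Gamma>" | B where "B \<in> \<Gamma>" "X = insert e0 B"
      using faces_with_subset by blast
    then show ?thesis
      using e_fresh e0_not_e that(2) by cases auto
  qed
  then have disjoint: "?B \<inter> (\<Union>r\<in>R. ?C r) = {}"
    by blast
  have "ftri \<Delta> i j = card ?B + card (\<Union>r\<in>R. ?C r)"
    unfolding ftri_eq_card_faces_with faces_with_decomp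
    using fin finite_R disjoint by (intro card_Un_disjoint) auto
  also have "card ?B = ftri \<Gamma> (i - 1) j + ftri \<Gamma> (i - 1) (j - 1)"
    unfolding ftri_eq_card_faces_with card0 [symmetric]
    using fin disjoint0 by (intro card_Un_disjoint) auto
  also have "card (\<Union>r\<in>R. ?C r) = (\<Sum>r\<in>R. ftri (\<Gamma>s r) (i - 1) (j - 1))"
    unfolding ftri_eq_card_faces_with
    using fin finite_R disjoint_r card_r by (simp add: card_UN_disjoint)
  finally show ?thesis .
qed

lemma htri_decomp: "htri \<Delta> i j = htri \<Gamma> (i - 1) j + (\<Sum>r\<in>R. htri (\<Gamma>s r) (i - 1) (j - 1))"
proof -
  define g where "g k = int (ftri \<Gamma> (i - 1) k)" for k
  define gs where "gs r k = int (ftri (\<Gamma>s r) (i - 1) k)" for r k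
  have "htri \<Delta> i j = h_transform (\<lambda>k. g k + (g (k - 1) + (\<Sum>r\<in>R. gs r (k - 1)))) i j"
    unfolding htri_eq_h_transform ftri_decomp g_def gs_def by (simp add: add.assoc)
  also have "\<dots> = h_transform g i j + h_transform g (i - 1) (j - 1)
      + (\<Sum>r\<in>R. h_transform (gs r) (i - 1) (j - 1))"
  proof -
    have "h_transform (\<lambda>k. g (k - 1)) i j = h_transform g (i - 1) (j - 1)"
      by (rule h_transform_shift) (simp add: g_def ftri_negative)
    moreover have "h_transform (\<lambda>k. gs r (k - 1)) i j = h_transform (gs r) (i - 1) (j - 1)" for r
      by (rule h_transform_shift) (simp add: gs_def ftri_negative)
    ultimately show ?thesis
      unfolding h_transform_add h_transform_sum by simp
  qed
  also have "h_transform g i j + h_transform g (i - 1) (j - 1) = h_transform g (i - 1) j"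
    by (rule h_transform_pascal) (simp add: g_def ftri_above_diagonal finite_\<Gamma>)
  finally show ?thesis
    unfolding htri_eq_h_transform g_def gs_def .
qed

lemma e_not_in_other_cones:
  assumes "r \<in> R" and "Q \<subseteq> R - {r}" and "X \<in> insert e0 ` \<Gamma> \<union> (\<Union>q\<in>Q. insert (e q) ` \<Gamma>s q)"
  shows "e r \<notin> X"
proof -
  from assms(3) consider A where "A \<in> \<Gamma>" "X = insert e0 A"
    | q A where "q \<in> Q" "A \<in> \<Gamma>s q" "X = insert (e q) A"
    by blast
  then show ?thesis
  proof cases
    case 1
    then show ?thesis
      using assms(1) e_fresh e0_not_e by auto
  next
    case (2 q A)
    then have "q \<in> R" "q \<noteq> r" "A \<in> \<Gamma>"
      using assms(2) \<Gamma>s_subset by auto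
    then have "e q \<noteq> e r"
      using assms(1) inj_on_eq_iff[OF inj_e] by metis
    then show ?thesis
      using 2 \<open>A \<in> \<Gamma>\<close> assms(1) e_fresh by auto
  qed
qed

lemma shelling_continues_new_cone:
  assumes L: "shelling_order (\<Gamma>s r) L" and r: "r \<in> R"
    and fresh: "\<forall>X\<in>S. e r \<notin> X" and base: "insert e0 ` facets \<Gamma> \<subseteq> S"
  shows "shelling_continues S (map (insert (e r)) L)"
proof (rule shelling_continues_cone[of "{}"])
  have L_faces: "set L \<subseteq> \<Gamma>s r"
    using L facets_subset by (simp add: shelling_order_iff)
  show "shelling_continues {} L"
    using L by (simp add: shelling_order_iff)
  show L_fresh: "\<forall>F\<in>set L. e r \<notin> F"
    using L_faces e_fresh_\<Gamma>s r by blast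
  show "\<forall>F\<in>set L. \<forall>X \<in> S - insert (e r) ` {}. shelling_step S X (insert (e r) F)"
  proof (intro ballI)
    fix F X
    assume F: "F \<in> set L" and X: "X \<in> S - insert (e r) ` {}"
    have "F \<in> \<Gamma>"
      using F L_faces \<Gamma>s_subset r by blast
    then obtain H where H: "H \<in> facets \<Gamma>" "F \<subseteq> H"
      using facet_above finite_\<Gamma> by blast
    text \<open>The cone over \<open>H\<close> meets the new facet in its codimension-one face \<open>F\<close>.\<close>
    have "e r \<notin> H" and "e0 \<notin> F" and "e0 \<noteq> e r"
      using H(1) \<open>F \<in> \<Gamma>\<close> facets_subset e0_fresh e_fresh e0_not_e r by blast+
    then have "insert e0 H \<inter> insert (e r) F = F"
      using H(2) by blast
    moreover have "insert e0 H \<in> S"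
      using H(1) base by blast
    moreover have "e r \<notin> X" and "e r \<notin> F"
      using fresh X L_fresh F by auto
    ultimately show "shelling_step S X (insert (e r) F)"
      by (intro shelling_step_new_vertex)
  qed
qed simp

lemma shelling_order_decomp:
  assumes L0: "shelling_order \<Gamma> L0" and Ls: "\<forall>r\<in>R. shelling_order (\<Gamma>s r) (Ls r)"
    and "distinct rs" and "set rs = R"
  shows "shelling_order \<Delta> (map (insert e0) L0 @ concat (map (\<lambda>r. map (insert (e r)) (Ls r)) rs))"
proof -
  let ?first = "map (insert e0) L0"
  let ?block = "\<lambda>r. map (insert (e r)) (Ls r)"
  have L0_facets: "set L0 = facets \<Gamma>" and Ls_facets: "r \<in> R \<Longrightarrow> set (Ls r) = facets (\<Gamma>s r)" for r
    using L0 Ls by (simp_all add: shelling_order_iff)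
  then have L0_faces: "set L0 \<subseteq> \<Gamma>" and Ls_faces: "r \<in> R \<Longrightarrow> set (Ls r) \<subseteq> \<Gamma>s r" for r
    using facets_subset by blast+
  have first_distinct: "distinct ?first"
    using L0 L0_faces e0_fresh by (intro distinct_map_insert_fresh) (auto simp: shelling_order_iff)
  have first_shelling: "shelling_continues {} ?first"
    using L0 L0_faces e0_fresh by (intro shelling_continues_cone[of "{}"]) (auto simp: shelling_order_iff)
  have blocks: "distinct (?first @ concat (map ?block qs)) \<and> shelling_continues {} (?first @ concat (map ?block qs))"
    if "distinct qs" and "set qs \<subseteq> R" for qs
    using that
  proof (induction qs rule: rev_induct)
    case (snoc r qs)
    let ?L = "?first @ concat (map ?block qs)"
    have r: "r \<in> R" and "set qs \<subseteq> R - {r}"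
      using snoc.prems by auto
    have "set ?L = insert e0 ` set L0 \<union> (\<Union>q\<in>set qs. insert (e q) ` set (Ls q))"
      by simp
    also have "\<dots> \<subseteq> insert e0 ` \<Gamma> \<union> (\<Union>q\<in>set qs. insert (e q) ` \<Gamma>s q)"
      using L0_faces Ls_faces snoc.prems(2) by (intro Un_mono image_mono UN_mono) auto
    finally have fresh: "\<forall>X\<in>set ?L. e r \<notin> X"
      using e_not_in_other_cones[OF r \<open>set qs \<subseteq> R - {r}\<close>] by blast
    have "shelling_continues (set ?L) (?block r)"
    proof (rule shelling_continues_new_cone[OF _ r fresh])
      show "shelling_order (\<Gamma>s r) (Ls r)"
        using Ls r by blast
      show "insert e0 ` facets \<Gamma> \<subseteq> set ?L"
        unfolding L0_facets [symmetric] by simp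
    qed
    moreover have "distinct (?block r)"
    proof (rule distinct_map_insert_fresh)
      show "distinct (Ls r)"
        using Ls r by (simp add: shelling_order_iff)
      show "\<forall>F\<in>set (Ls r). e r \<notin> F"
        using Ls_faces[OF r] e_fresh_\<Gamma>s[OF r] by blast
    qed
    moreover have "set ?L \<inter> set (?block r) = {}"
      using fresh by auto
    moreover have "distinct ?L \<and> shelling_continues {} ?L"
      using snoc by simp
    moreover have "?first @ concat (map ?block (qs @ [r])) = ?L @ ?block r"
      by simp
    ultimately show ?case
      by (simp only: distinct_append shelling_continues_append Un_empty_left)
  qed (simp add: first_distinct first_shelling)
  moreover have "set (?first @ concat (map ?block rs)) = facets \<Delta>"
    using L0_facets Ls_facets \<open>set rs = R\<close> by (simp add: facets_decomp)
  ultimately show ?thesis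
    using assms(3,4) unfolding shelling_order_iff by blast
qed

end

section \<open>Directed forests\<close>

lemma Delta_subset_edges: "A \<in> Delta E \<Longrightarrow> A \<subseteq> E"
  unfolding Delta_def directed_forest_def by blast

lemma Delta_restrict: "E' \<subseteq> E \<Longrightarrow> Delta E' = {A \<in> Delta E. A \<subseteq> E'}"
  unfolding Delta_def directed_forest_def by blast

lemma Delta_downward_closed: "A \<in> Delta E \<Longrightarrow> B \<subseteq> A \<Longrightarrow> B \<in> Delta E"
  unfolding Delta_def directed_forest_def using acyclic_subset by blast

lemma finite_Delta: "finite E \<Longrightarrow> finite (Delta E)"
  using finite_subset[of "Delta E" "Pow E"] Delta_subset_edges by blast

lemma finite_faces_Delta: "finite E \<Longrightarrow> \<forall>A\<in>Delta E. finite A"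
  using Delta_subset_edges finite_subset by blast

lemma Delta_in_degree: "A \<in> Delta E \<Longrightarrow> (u, w) \<in> A \<Longrightarrow> (u', w) \<in> A \<Longrightarrow> u = u'"
  unfolding Delta_def directed_forest_def by blast

lemma Delta_no_2cycle:
  assumes "A \<in> Delta E" and "(a, b) \<in> A"
  shows "(b, a) \<notin> A"
proof
  assume "(b, a) \<in> A"
  with \<open>(a, b) \<in> A\<close> have "(a, a) \<in> A\<^sup>+"
    by (rule trancl_into_trancl [OF r_into_trancl])
  moreover have "acyclic A"
    using assms(1) unfolding Delta_def directed_forest_def by blast
  ultimately show False
    unfolding acyclic_def by blast
qed

lemma insert_Delta_iff:
  assumes "(a, b) \<notin> A"
  shows "insert (a, b) A \<in> Delta E \<longleftrightarrow>
    (a, b) \<in> E \<and> A \<in> Delta E \<and> (\<forall>u. (u, b) \<notin> A) \<and> (b, a) \<notin> A\<^sup>*"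
proof -
  have "(\<forall>u u' w. (u, w) \<in> insert (a, b) A \<and> (u', w) \<in> insert (a, b) A \<longrightarrow> u = u') \<longleftrightarrow>
      (\<forall>u u' w. (u, w) \<in> A \<and> (u', w) \<in> A \<longrightarrow> u = u') \<and> (\<forall>u. (u, b) \<notin> A)"
    using assms by blast
  then show ?thesis
    unfolding Delta_def directed_forest_def mem_Collect_eq acyclic_insert by blast
qed

lemma has_ucycle_closing_path:
  assumes path: "rtrancl_path (\<lambda>x y. (x, y) \<in> E) a xs b" and "distinct (a # xs)"
    and "2 \<le> length xs" and "(b, a) \<in> E"
  shows "has_ucycle E"
  unfolding has_ucycle_def
proof (intro exI[of _ "a # xs"] conjI allI impI)
  show "3 \<le> length (a # xs)" and "distinct (a # xs)"
    using assms(2,3) by simp_all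
  fix i
  assume "i < length (a # xs)"
  show "uadj E ((a # xs) ! i) ((a # xs) ! (Suc i mod length (a # xs)))"
  proof (cases "i < length xs")
    case True
    then show ?thesis
      using rtrancl_path_nth[OF path True] unfolding uadj_def by simp
  next
    case False
    then have "i = length xs" and "xs \<noteq> []"
      using \<open>i < length (a # xs)\<close> assms(3) by auto
    moreover have "last xs = b"
      using path \<open>xs \<noteq> []\<close> by (rule rtrancl_path_last)
    ultimately show ?thesis
      using \<open>(b, a) \<in> E\<close> unfolding uadj_def by (simp add: last_conv_nth)
  qed
qed

text \<open>A path from \<open>a\<close> to \<open>b\<close> avoiding the edge \<open>ab\<close> would close a cycle with the edge \<open>ba\<close>.\<close>

lemma no_ucycle_not_rtrancl:
  assumes "\<not> has_ucycle E" and "G \<subseteq> E" and "(a, b) \<notin> G" and "a \<noteq> b" and "(b, a) \<in> E"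
  shows "(a, b) \<notin> G\<^sup>*"
proof
  assume "(a, b) \<in> G\<^sup>*"
  then have "(\<lambda>x y. (x, y) \<in> G)\<^sup>*\<^sup>* a b"
    by (simp add: rtranclp_rtrancl_eq)
  then obtain xs where "rtrancl_path (\<lambda>x y. (x, y) \<in> G) a xs b"
    using rtranclp_eq_rtrancl_path by metis
  then obtain xs where path: "rtrancl_path (\<lambda>x y. (x, y) \<in> G) a xs b" and "distinct (a # xs)"
    by (rule rtrancl_path_distinct)
  have "xs \<noteq> []"
    using path \<open>a \<noteq> b\<close> by (auto elim: rtrancl_path.cases)
  have "length xs \<noteq> 1"
  proof
    assume "length xs = 1"
    moreover have "last xs = b"
      using path \<open>xs \<noteq> []\<close> by (rule rtrancl_path_last)
    ultimately have "xs = [b]"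
      by (cases xs) auto
    then show False
      using rtrancl_path_nth[OF path, of 0] \<open>(a, b) \<notin> G\<close> by simp
  qed
  with \<open>xs \<noteq> []\<close> have "2 \<le> length xs"
    by (cases xs) (auto simp: Suc_le_eq)
  moreover have "rtrancl_path (\<lambda>x y. (x, y) \<in> E) a xs b"
    using path by (rule rtrancl_path_mono) (use \<open>G \<subseteq> E\<close> in blast)
  ultimately have "has_ucycle E"
    using \<open>distinct (a # xs)\<close> \<open>(b, a) \<in> E\<close> by (intro has_ucycle_closing_path)
  with assms(1) show False ..
qed

section \<open>Deleting a leaf\<close>

locale tree_leaf =
  fixes E :: "('a \<times> 'a) set" and v x :: 'a and ys :: "'a list"
    and E' E0 :: "('a \<times> 'a) set" and Ep :: "nat \<Rightarrow> ('a \<times> 'a) set"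
  assumes finite_E: "finite E" and loop_free: "\<forall>u. (u, u) \<notin> E" and no_ucycle: "\<not> has_ucycle E"
    and x_ne_v: "x \<noteq> v"
    and leaf: "\<forall>e\<in>E. fst e = v \<or> snd e = v \<longrightarrow> e = (v, x) \<or> e = (x, v)"
    and E'_def: "E' = del_vertex_edges E v"
    and E0_def: "E0 = E' - {(y, x) | y. y \<in> set ys}"
    and Ep_def: "\<And>p. Ep p = E0 - {(x, ys ! p)}"
    and ys_set: "set ys = {y. (y, x) \<in> E'}"
    and ys_distinct: "distinct ys"
begin

lemma E'_iff: "(a, b) \<in> E' \<longleftrightarrow> (a, b) \<in> E \<and> a \<noteq> v \<and> b \<noteq> v"
  by (simp add: E'_def del_vertex_edges_def)

lemma E0_iff: "(a, b) \<in> E0 \<longleftrightarrow> (a, b) \<in> E' \<and> b \<noteq> x"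
proof -
  have "(a, b) \<in> {(y, x) | y. y \<in> set ys} \<longleftrightarrow> b = x \<and> a \<in> set ys"
    by blast
  moreover have "(a, x) \<in> E' \<Longrightarrow> a \<in> set ys"
    using ys_set by simp
  ultimately show ?thesis
    unfolding E0_def by blast
qed

lemma Ep_iff: "(a, b) \<in> Ep p \<longleftrightarrow> (a, b) \<in> E0 \<and> (a, b) \<noteq> (x, ys ! p)"
  by (simp add: Ep_def)

lemma E'_subset: "E' \<subseteq> E" and E0_subset: "E0 \<subseteq> E'" and Ep_subset: "Ep p \<subseteq> E0"
  by (auto simp: E'_def E0_def Ep_def del_vertex_edges_def)

lemma ys_edge: "p < length ys \<Longrightarrow> (ys ! p, x) \<in> E'"
  using ys_set nth_mem by blast

lemma leaf_edge: "(a, b) \<in> E \<Longrightarrow> a = v \<or> b = v \<Longrightarrow> (a, b) = (v, x) \<or> (a, b) = (x, v)"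
  using leaf by (metis fst_conv snd_conv)

lemma Delta_E'_eq: "Delta E' = {A \<in> Delta E. (x, v) \<notin> A \<and> (v, x) \<notin> A}"
proof -
  have key: "A \<subseteq> E' \<longleftrightarrow> (x, v) \<notin> A \<and> (v, x) \<notin> A" if "A \<subseteq> E" for A
  proof
    assume "A \<subseteq> E'"
    then show "(x, v) \<notin> A \<and> (v, x) \<notin> A"
      using E'_iff by blast
  next
    assume avoid: "(x, v) \<notin> A \<and> (v, x) \<notin> A"
    show "A \<subseteq> E'"
    proof (rule subrelI)
      fix a b
      assume "(a, b) \<in> A"
      moreover from this have "(a, b) \<in> E"
        using that by blast
      ultimately have "a \<noteq> v \<and> b \<noteq> v"
        using leaf_edge avoid by blast
      with \<open>(a, b) \<in> E\<close> show "(a, b) \<in> E'"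
        by (simp add: E'_iff)
    qed
  qed
  show ?thesis
    unfolding Delta_restrict[OF E'_subset] by (rule Collect_cong) (metis key Delta_subset_edges)
qed

lemma Delta_E'_avoids_v: "A \<in> Delta E' \<Longrightarrow> (a, b) \<in> A \<Longrightarrow> a \<noteq> v \<and> b \<noteq> v"
  using Delta_subset_edges[of A E'] E'_iff[of a b] by blast

lemma Delta_E0_eq: "Delta E0 = {A \<in> Delta E'. \<forall>u. (u, x) \<notin> A}"
proof -
  have key: "A \<subseteq> E0 \<longleftrightarrow> (\<forall>u. (u, x) \<notin> A)" if "A \<subseteq> E'" for A
  proof
    assume "A \<subseteq> E0"
    then show "\<forall>u. (u, x) \<notin> A"
      using E0_iff by blast
  next
    assume no_edge_into_x: "\<forall>u. (u, x) \<notin> A"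
    show "A \<subseteq> E0"
    proof (rule subrelI)
      fix a b
      assume "(a, b) \<in> A"
      then have "(a, b) \<in> E'" and "b \<noteq> x"
        using that no_edge_into_x by blast+
      then show "(a, b) \<in> E0"
        using E0_iff by blast
    qed
  qed
  show ?thesis
    unfolding Delta_restrict[OF E0_subset] by (rule Collect_cong) (metis key Delta_subset_edges)
qed

lemma faces_containing_xv:
  assumes "(x, v) \<in> E"
  shows "{A \<in> Delta E. (x, v) \<in> A} = insert (x, v) ` Delta E'"
proof (intro equalityI subsetI)
  fix A
  assume "A \<in> {A \<in> Delta E. (x, v) \<in> A}"
  then have A: "A \<in> Delta E" "(x, v) \<in> A"
    by simp_all
  let ?B = "A - {(x, v)}"
  have "?B \<in> Delta E"
    using Delta_downward_closed[OF A(1)] by blast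
  moreover have "(v, x) \<notin> ?B"
    using Delta_no_2cycle[OF A] by blast
  ultimately have "?B \<in> Delta E'"
    unfolding Delta_E'_eq by blast
  moreover have "A = insert (x, v) ?B"
    using A(2) by blast
  ultimately show "A \<in> insert (x, v) ` Delta E'"
    by (rule rev_image_eqI)
next
  fix A
  assume "A \<in> insert (x, v) ` Delta E'"
  then obtain B where B: "B \<in> Delta E'" and A: "A = insert (x, v) B"
    by blast
  have no_v: "a \<noteq> v \<and> b \<noteq> v" if "(a, b) \<in> B" for a b
    using Delta_E'_avoids_v[OF B that] .
  have "(v, x) \<notin> B\<^sup>*"
  proof
    assume "(v, x) \<in> B\<^sup>*"
    then show False
      using x_ne_v no_v by (blast elim: converse_rtranclE)
  qed
  moreover have "B \<in> Delta E" and "(x, v) \<notin> B"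
    using B unfolding Delta_E'_eq by blast+
  ultimately have "insert (x, v) B \<in> Delta E"
    unfolding insert_Delta_iff[OF \<open>(x, v) \<notin> B\<close>] using assms no_v by blast
  then show "A \<in> {A \<in> Delta E. (x, v) \<in> A}"
    using A by blast
qed

lemma faces_containing_vx:
  assumes "(v, x) \<in> E"
  shows "{A \<in> Delta E. (v, x) \<in> A} = insert (v, x) ` Delta E0"
proof (intro equalityI subsetI)
  fix A
  assume "A \<in> {A \<in> Delta E. (v, x) \<in> A}"
  then have A: "A \<in> Delta E" "(v, x) \<in> A"
    by simp_all
  let ?B = "A - {(v, x)}"
  have "?B \<in> Delta E"
    using Delta_downward_closed[OF A(1)] by blast
  moreover have "(x, v) \<notin> ?B"
    using Delta_no_2cycle[OF A] by blast
  ultimately have "?B \<in> Delta E'"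
    unfolding Delta_E'_eq by blast
  moreover have "(u, x) \<notin> ?B" for u
    using Delta_in_degree[OF A(1) _ A(2)] by blast
  ultimately have "?B \<in> Delta E0"
    unfolding Delta_E0_eq by blast
  moreover have "A = insert (v, x) ?B"
    using A(2) by blast
  ultimately show "A \<in> insert (v, x) ` Delta E0"
    by (rule rev_image_eqI)
next
  fix A
  assume "A \<in> insert (v, x) ` Delta E0"
  then obtain B where B: "B \<in> Delta E0" and A: "A = insert (v, x) B"
    by blast
  have B': "B \<in> Delta E'" and no_edge_into_x: "\<forall>u. (u, x) \<notin> B"
    using B unfolding Delta_E0_eq by blast+
  then have "B \<in> Delta E"
    unfolding Delta_E'_eq by blast
  have no_v: "a \<noteq> v \<and> b \<noteq> v" if "(a, b) \<in> B" for a b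
    using Delta_E'_avoids_v[OF B' that] .
  have "(x, v) \<notin> B\<^sup>*"
  proof
    assume "(x, v) \<in> B\<^sup>*"
    then show False
      using x_ne_v no_v by (blast elim: rtranclE)
  qed
  moreover have "(v, x) \<notin> B"
    using no_v by blast
  ultimately have "insert (v, x) B \<in> Delta E"
    unfolding insert_Delta_iff[OF \<open>(v, x) \<notin> B\<close>]
    using assms \<open>B \<in> Delta E\<close> no_edge_into_x by blast
  then show "A \<in> {A \<in> Delta E. (v, x) \<in> A}"
    using A by blast
qed

lemma Delta_Ep_eq: "Delta (Ep p) = {A \<in> Delta E0. (x, ys ! p) \<notin> A}"
proof -
  have key: "A \<subseteq> Ep p \<longleftrightarrow> (x, ys ! p) \<notin> A" if "A \<subseteq> E0" for A
    using that Ep_iff by auto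
  show ?thesis
    unfolding Delta_restrict[OF Ep_subset] by (rule Collect_cong) (metis key Delta_subset_edges)
qed

lemma insert_in_edge_Delta_E':
  assumes "p < length ys" and "B \<in> Delta (Ep p)"
  shows "insert (ys ! p, x) B \<in> Delta E'"
proof -
  have "B \<in> Delta E0" and back_edge: "(x, ys ! p) \<notin> B"
    using assms(2) unfolding Delta_Ep_eq by blast+
  then have B: "B \<in> Delta E'" and into_x: "\<forall>u. (u, x) \<notin> B"
    unfolding Delta_E0_eq by blast+
  have edge: "(ys ! p, x) \<in> E'"
    using ys_edge[OF assms(1)] .
  text \<open>The only place where \<open>D\<close> being essentially a tree is used.\<close>
  have "(x, ys ! p) \<notin> B\<^sup>*"
  proof (rule no_ucycle_not_rtrancl[OF no_ucycle])
    show "B \<subseteq> E"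
      using Delta_subset_edges[OF B] E'_subset by blast
    show "x \<noteq> ys ! p" and "(ys ! p, x) \<in> E"
      using edge E'_subset loop_free by blast+
  qed (rule back_edge)
  moreover have "(ys ! p, x) \<notin> B"
    using into_x by blast
  ultimately show ?thesis
    unfolding insert_Delta_iff[OF \<open>(ys ! p, x) \<notin> B\<close>] using edge B into_x by blast
qed

lemma Delta_E'_decomp: "Delta E' = Delta E0 \<union> (\<Union>p<length ys. insert (ys ! p, x) ` Delta (Ep p))"
proof (intro equalityI subsetI)
  fix A
  assume A: "A \<in> Delta E'"
  show "A \<in> Delta E0 \<union> (\<Union>p<length ys. insert (ys ! p, x) ` Delta (Ep p))"
  proof (cases "\<exists>u. (u, x) \<in> A")
    case False
    then have "A \<in> Delta E0"
      using A unfolding Delta_E0_eq by blast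
    then show ?thesis
      by blast
  next
    case True
    then obtain u where u: "(u, x) \<in> A"
      by blast
    then have "u \<in> set ys"
      using Delta_subset_edges[OF A] ys_set by blast
    then obtain p where p: "p < length ys" "ys ! p = u"
      by (auto simp: in_set_conv_nth)
    let ?B = "A - {(u, x)}"
    have "?B \<in> Delta E'"
      using Delta_downward_closed[OF A] by blast
    moreover have "\<forall>w. (w, x) \<notin> ?B"
      using Delta_in_degree[OF A _ u] by blast
    ultimately have "?B \<in> Delta E0"
      unfolding Delta_E0_eq by blast
    moreover have "(x, ys ! p) \<notin> ?B"
      using Delta_no_2cycle[OF A u] p(2) by blast
    ultimately have "?B \<in> Delta (Ep p)"
      unfolding Delta_Ep_eq by blast
    moreover have "A = insert (ys ! p, x) ?B"
      using u p(2) by blast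
    ultimately show ?thesis
      using p(1) by blast
  qed
next
  fix A
  assume "A \<in> Delta E0 \<union> (\<Union>p<length ys. insert (ys ! p, x) ` Delta (Ep p))"
  then consider "A \<in> Delta E0"
    | p B where "p < length ys" "B \<in> Delta (Ep p)" "A = insert (ys ! p, x) B"
    by blast
  then show "A \<in> Delta E'"
  proof cases
    case 1
    then show ?thesis
      unfolding Delta_E0_eq by blast
  next
    case (2 p B)
    then show ?thesis
      using insert_in_edge_Delta_E' by blast
  qed
qed

lemma finite_E': "finite E'"
  using finite_subset[OF E'_subset finite_E] .

lemma finite_E0: "finite E0"
  using finite_subset[OF E0_subset finite_E'] .

lemma Delta_E_eq: "Delta E = Delta E' \<union> {A \<in> Delta E. (x, v) \<in> A} \<union> {A \<in> Delta E. (v, x) \<in> A}"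
  unfolding Delta_E'_eq by blast

lemma shelling_out_leaf:
  assumes "(x, v) \<in> E" and "(v, x) \<notin> E" and Fs: "shelling_order (Delta E') Fs"
  shows "shelling_order (Delta E) (map (insert (x, v)) Fs) \<and>
    (\<forall>i j. htri (Delta E) i j = htri (Delta E') (i - 1) j)"
proof -
  have no_vx: "{A \<in> Delta E. (v, x) \<in> A} = {}"
    using assms(2) Delta_subset_edges by blast
  have decomp: "Delta E = Delta E' \<union> insert (x, v) ` Delta E'"
    using Delta_E_eq unfolding no_vx faces_containing_xv[OF assms(1)] by simp
  interpret cone_decomposition "Delta E" "Delta E'" "(x, v)" "{} :: nat set" "\<lambda>_. (x, v)" "\<lambda>_. {}"
  proof unfold_locales
    show "Delta E = Delta E' \<union> insert (x, v) ` Delta E' \<union> (\<Union>r\<in>{}. insert (x, v) ` {})"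
      using decomp by simp
    show "\<forall>A\<in>Delta E'. (x, v) \<notin> A"
      unfolding Delta_E'_eq by blast
  qed (simp_all add: finite_Delta finite_faces_Delta[OF finite_E'] finite_E')
  show ?thesis
    using shelling_order_decomp[of Fs "\<lambda>_. []" "[]"] Fs htri_decomp by simp
qed

lemma shelling_in_leaf:
  assumes "(x, v) \<notin> E" and "(v, x) \<in> E" and Hs: "shelling_order (Delta E0) Hs"
    and Gs: "\<forall>p < length ys. shelling_order (Delta (Ep p)) (Gs p)"
  shows "shelling_order (Delta E)
      (map (insert (v, x)) Hs @ concat (map (\<lambda>p. map (insert (ys ! p, x)) (Gs p)) [0..<length ys])) \<and>
    (\<forall>i j. htri (Delta E) i j =
      htri (Delta E0) (i - 1) j + (\<Sum>p < length ys. htri (Delta (Ep p)) (i - 1) (j - 1)))"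
proof -
  have no_xv: "{A \<in> Delta E. (x, v) \<in> A} = {}"
    using assms(1) Delta_subset_edges by blast
  have decomp: "Delta E = Delta E0 \<union> insert (v, x) ` Delta E0
      \<union> (\<Union>p<length ys. insert (ys ! p, x) ` Delta (Ep p))"
    using Delta_E_eq unfolding no_xv faces_containing_vx[OF assms(2)] Delta_E'_decomp by auto
  interpret cone_decomposition "Delta E" "Delta E0" "(v, x)" "{..<length ys}"
      "\<lambda>p. (ys ! p, x)" "\<lambda>p. Delta (Ep p)"
  proof unfold_locales
    show "\<forall>A\<in>Delta E0. (v, x) \<notin> A" and "\<forall>p\<in>{..<length ys}. \<forall>A\<in>Delta E0. (ys ! p, x) \<notin> A"
      unfolding Delta_E0_eq Delta_E'_eq by blast+
    show "(v, x) \<notin> (\<lambda>p. (ys ! p, x)) ` {..<length ys}"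
      using ys_edge E'_iff by fastforce
    show "inj_on (\<lambda>p. (ys ! p, x)) {..<length ys}"
      using ys_distinct by (auto simp: inj_on_def nth_eq_iff_index_eq)
    show "\<forall>p\<in>{..<length ys}. Delta (Ep p) \<subseteq> Delta E0"
      unfolding Delta_Ep_eq by blast
  qed (simp_all add: decomp finite_Delta finite_faces_Delta[OF finite_E0] finite_E0)
  have "shelling_order (Delta E)
      (map (insert (v, x)) Hs @ concat (map (\<lambda>p. map (insert (ys ! p, x)) (Gs p)) [0..<length ys]))"
    by (rule shelling_order_decomp[of Hs Gs "[0..<length ys]"]) (use Hs Gs in auto)
  then show ?thesis
    using htri_decomp by simp
qed

lemma shelling_two_way_leaf:
  assumes "(x, v) \<in> E" and "(v, x) \<in> E"
    and Fs: "shelling_order (Delta E') Fs" and Hs: "shelling_order (Delta E0) Hs"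
  shows "shelling_order (Delta E) (map (insert (x, v)) Fs @ map (insert (v, x)) Hs) \<and>
    (\<forall>i j. htri (Delta E) i j = htri (Delta E') (i - 1) j + htri (Delta E0) (i - 1) (j - 1))"
proof -
  have decomp: "Delta E = Delta E' \<union> insert (x, v) ` Delta E' \<union> (\<Union>r\<in>{0 :: nat}. insert (v, x) ` Delta E0)"
    using Delta_E_eq faces_containing_xv[OF assms(1)] faces_containing_vx[OF assms(2)] by simp
  interpret cone_decomposition "Delta E" "Delta E'" "(x, v)" "{0 :: nat}" "\<lambda>_. (v, x)" "\<lambda>_. Delta E0"
  proof unfold_locales
    show "\<forall>A\<in>Delta E'. (x, v) \<notin> A" and "\<forall>r\<in>{0}. \<forall>A\<in>Delta E'. (v, x) \<notin> A"
      unfolding Delta_E'_eq by blast+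
    show "\<forall>r\<in>{0}. Delta E0 \<subseteq> Delta E'"
      unfolding Delta_E0_eq by blast
  qed (simp_all add: decomp x_ne_v finite_Delta finite_faces_Delta[OF finite_E'] finite_E')
  show ?thesis
    using shelling_order_decomp[of Fs "\<lambda>_. Hs" "[0]"] Fs Hs htri_decomp by simp
qed

end

theorem mainTheorem9:
  fixes V :: "'a set" and E :: "('a \<times> 'a) set" and v x :: 'a
    and ys :: "'a list" and s :: nat
    and Fs Hs :: "('a \<times> 'a) set list" and Gs :: "nat \<Rightarrow> ('a \<times> 'a) set list"
  defines "E' \<equiv> del_vertex_edges E v"
  defines "E0 \<equiv> E' - {(y, x) | y. y \<in> set ys}"
  defines "Ep \<equiv> (\<lambda>p. E0 - {(x, ys ! p)})"
  assumes D: "digraph V E"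
    and tree: "essentially_tree V E"
    and two: "card V \<ge> 2"
    and vV: "v \<in> V" and xV: "x \<in> V" and xv: "x \<noteq> v"
    and leaf: "\<forall>e \<in> E. fst e = v \<or> snd e = v \<longrightarrow> e = (v, x) \<or> e = (x, v)"
    and leaf_nonempty: "(v, x) \<in> E \<or> (x, v) \<in> E"
    and ys_set: "set ys = {y. (y, x) \<in> E'}"
    and ys_dist: "distinct ys"
    and s_le: "s \<le> length ys"
    and ys_s: "\<forall>i < length ys. (x, ys ! i) \<in> E \<longleftrightarrow> i < s"
    and Fs: "shelling_order (Delta E') Fs"
    and Hs: "shelling_order (Delta E0) Hs"
    and Gs: "\<forall>p < length ys. shelling_order (Delta (Ep p)) (Gs p)"
  shows
    "((x, v) \<in> E \<and> (v, x) \<notin> E \<longrightarrow>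
        shelling_order (Delta E) (map (insert (x, v)) Fs) \<and>
        (\<forall>i j :: int. htri (Delta E) i j = htri (Delta E') (i - 1) j))
   \<and> ((x, v) \<notin> E \<and> (v, x) \<in> E \<longrightarrow>
        shelling_order (Delta E)
          (map (insert (v, x)) Hs @
           concat (map (\<lambda>p. map (insert (ys ! p, x)) (Gs p)) [0..<length ys])) \<and>
        (\<forall>i j :: int. htri (Delta E) i j =
           htri (Delta E0) (i - 1) j + (\<Sum>p < length ys. htri (Delta (Ep p)) (i - 1) (j - 1))))
   \<and> ((x, v) \<in> E \<and> (v, x) \<in> E \<longrightarrow>
        shelling_order (Delta E) (map (insert (x, v)) Fs @ map (insert (v, x)) Hs) \<and>
        (\<forall>i j :: int. htri (Delta E) i j =
           htri (Delta E') (i - 1) j + htri (Delta E0) (i - 1) (j - 1)))"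
proof -
  text \<open>The index \<open>s\<close> only records which \<open>D\<^sub>p\<close> coincide with \<open>D\<^sub>0\<close>.\<close>
  have "finite E" and "\<forall>u. (u, u) \<notin> E"
    using D unfolding digraph_def by (auto intro: finite_subset)
  moreover have "\<not> has_ucycle E"
    using tree unfolding essentially_tree_def by blast
  ultimately interpret tree_leaf E v x ys E' E0 Ep
    using xv leaf ys_set ys_dist by unfold_locales (simp_all add: E'_def E0_def Ep_def)
  show ?thesis
    using shelling_out_leaf[OF _ _ Fs] shelling_in_leaf[OF _ _ Hs Gs] shelling_two_way_leaf[OF _ _ Fs Hs]
    by blast
qed

end
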